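(* Let $\nu_1,\dots,\nu_\beta$ be the centers returned by an $\alpha$-approximation clustering algorithm (as in the context), and suppose $|\mu_r-\mu_s|\ge c\,\phi_\ast\left(\frac1{n_s}+\frac1{n_r}\right)$ for all distinct $r,s$. Then for every $\mathcal T_s$ there exists a center $\nu_s$ with $$|\nu_s-\mu_s|\le 2(\alpha+1)\frac{\phi_\ast}{n_s},$$ and, with the centers so labeled, $\gamma<\frac{2(\alpha+1)}{c}$.
   Context: Points $x_1,\dots,x_N$ are real numbers, each drawn independently from one of $\beta$ distributions with means $\mu_1,\dots,\mu_\beta$; $\mathcal T_s$ is the set of points from distribution $s$, $n_s=|\mathcal T_s|$; $\phi_\ast=\sum_i|x_i-\mathbb{E}(x_i)|$; $c>0$ a constant; $g(S)=\frac1{|S|}\sum_{x\in S}x$. The $\alpha$-approximation algorithm returns $\beta$ centers; $C(x)$ denotes the center of the cluster containing $x$, and the returned centers satisfy $\sum_i|x_i-C(x_i)|\le\alpha\cdot\mathrm{OPT}$, where $\mathrm{OPT}$ is the minimum of this cost over all choices of $\beta$ centers with points assigned to clusters. Define $\Delta_s=|\mu_s-\nu_s|$ and $\gamma=\max_{s,\,r\ne s}\frac{\Delta_s}{|\mu_r-\mu_s|}$. *)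

theory Defs
  imports Complex_Main
begin

text \<open>Points are indexed by i < N; lab i < beta is the distribution point i is drawn
from, so E(x_i) = mu (lab i).  Clusterings use centers indexed by j < beta and an
assignment of points to centers.\<close>

definition T :: "nat \<Rightarrow> (nat \<Rightarrow> nat) \<Rightarrow> nat \<Rightarrow> nat set" where
  "T N lab s = {i. i < N \<and> lab i = s}"

definition phi_star :: "nat \<Rightarrow> (nat \<Rightarrow> real) \<Rightarrow> (nat \<Rightarrow> nat) \<Rightarrow> (nat \<Rightarrow> real) \<Rightarrow> real" where
  "phi_star N x lab mu = (\<Sum>i<N. \<bar>x i - mu (lab i)\<bar>)"

definition clust_cost :: "nat \<Rightarrow> (nat \<Rightarrow> real) \<Rightarrow> (nat \<Rightarrow> real) \<Rightarrow> (nat \<Rightarrow> nat) \<Rightarrow> real" where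
  "clust_cost N x cen asg = (\<Sum>i<N. \<bar>x i - cen (asg i)\<bar>)"

definition OPT :: "nat \<Rightarrow> nat \<Rightarrow> (nat \<Rightarrow> real) \<Rightarrow> real" where
  "OPT N beta x = Inf {clust_cost N x cen asg | cen asg. \<forall>i<N. asg i < beta}"

definition gamma :: "nat \<Rightarrow> (nat \<Rightarrow> real) \<Rightarrow> (nat \<Rightarrow> real) \<Rightarrow> real" where
  "gamma beta mu nu = Max {\<bar>mu s - nu s\<bar> / \<bar>mu r - mu s\<bar> | s r. s < beta \<and> r < beta \<and> r \<noteq> s}"

end

theory Submission
  imports Defs
begin

text \<open>Assigning every point to the mean of its own distribution is a clustering of cost
\<open>\<phi>\<^sub>*\<close>, so the \<open>\<alpha>\<close>-approximate clustering costs at most \<open>\<alpha> \<phi>\<^sub>*\<close>. By the triangle inequality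
the distances from \<open>\<mu>\<^sub>s\<close> to the centers assigned to the points of \<open>\<T>\<^sub>s\<close> sum to at most
\<open>(\<alpha> + 1) \<phi>\<^sub>*\<close>, so one of these centers lies within \<open>(\<alpha> + 1) \<phi>\<^sub>* / n\<^sub>s\<close> of \<open>\<mu>\<^sub>s\<close>.
Label it \<open>\<nu>\<^sub>s\<close>; the separation hypothesis gives \<open>|\<mu>\<^sub>r - \<mu>\<^sub>s| \<ge> c \<phi>\<^sub>* / n\<^sub>s\<close>, whence every ratio
in \<open>\<gamma>\<close> is at most \<open>(\<alpha> + 1) / c\<close>.\<close>

lemma phi_star_nonneg: "phi_star N x lab mu \<ge> 0"
  unfolding phi_star_def by (simp add: sum_nonneg)

lemma OPT_le_phi_star:
  assumes "\<forall>i<N. lab i < beta"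
  shows "OPT N beta x \<le> phi_star N x lab mu"
proof -
  let ?costs = "{clust_cost N x cen asg | cen asg. \<forall>i<N. asg i < beta}"
  have "phi_star N x lab mu \<in> ?costs"
    unfolding phi_star_def clust_cost_def using assms by blast
  moreover have "bdd_below ?costs"
    by (rule bdd_belowI[of _ 0]) (auto simp: clust_cost_def sum_nonneg)
  ultimately show ?thesis
    unfolding OPT_def by (rule cInf_lower)
qed

lemma exists_le_average:
  fixes f :: "'a \<Rightarrow> real"
  assumes "finite A" "A \<noteq> {}"
  shows "\<exists>i\<in>A. real (card A) * f i \<le> sum f A"
proof -
  have "real (card A) * Min (f ` A) \<le> sum f A"
    by (rule sum_bounded_below) (use assms in simp)
  moreover have "Min (f ` A) \<in> f ` A"
    using assms by simp
  ultimately show ?thesis by auto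
qed

lemma exists_assigned_center_near_mean:
  fixes x cen mu :: "nat \<Rightarrow> real"
  assumes C: "\<forall>i<N. C i < beta" and ne: "T N lab s \<noteq> {}"
  shows "\<exists>j<beta. card (T N lab s) * \<bar>cen j - mu s\<bar>
           \<le> clust_cost N x cen C + phi_star N x lab mu"
proof -
  have fin: "finite (T N lab s)"
    unfolding T_def by simp
  obtain i where i: "i \<in> T N lab s"
    and avg: "card (T N lab s) * \<bar>cen (C i) - mu s\<bar> \<le> (\<Sum>k\<in>T N lab s. \<bar>cen (C k) - mu s\<bar>)"
    using exists_le_average[OF fin ne, of "\<lambda>k. \<bar>cen (C k) - mu s\<bar>"] by blast
  have "(\<Sum>k\<in>T N lab s. \<bar>cen (C k) - mu s\<bar>)
      \<le> (\<Sum>k\<in>T N lab s. \<bar>x k - cen (C k)\<bar> + \<bar>x k - mu (lab k)\<bar>)"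
    by (rule sum_mono) (auto simp: T_def)
  also have "\<dots> \<le> (\<Sum>k<N. \<bar>x k - cen (C k)\<bar> + \<bar>x k - mu (lab k)\<bar>)"
    by (rule sum_mono2) (auto simp: T_def)
  also have "\<dots> = clust_cost N x cen C + phi_star N x lab mu"
    unfolding clust_cost_def phi_star_def by (simp add: sum.distrib)
  finally have "card (T N lab s) * \<bar>cen (C i) - mu s\<bar> \<le> clust_cost N x cen C + phi_star N x lab mu"
    using avg by linarith
  moreover have "C i < beta"
    using C i by (auto simp: T_def)
  ultimately show ?thesis by blast
qed

lemma gamma_le:
  assumes "beta \<ge> 2" "g \<ge> 0"
    and "\<And>s r. s < beta \<Longrightarrow> r < beta \<Longrightarrow> r \<noteq> s \<Longrightarrow> \<bar>mu s - nu s\<bar> \<le> g * \<bar>mu r - mu s\<bar>"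
  shows "gamma beta mu nu \<le> g"
proof -
  let ?ratio = "\<lambda>(s, r). \<bar>mu s - nu s\<bar> / \<bar>mu r - mu s\<bar>"
  define S where "S = {\<bar>mu s - nu s\<bar> / \<bar>mu r - mu s\<bar> | s r. s < beta \<and> r < beta \<and> r \<noteq> s}"
  have "S \<subseteq> ?ratio ` ({..<beta} \<times> {..<beta})"
    unfolding S_def by auto
  then have "finite S"
    by (rule finite_subset) simp
  moreover have "?ratio (0, 1) \<in> S"
    unfolding S_def using assms(1) by force
  moreover have "y \<le> g" if "y \<in> S" for y
  proof -
    obtain s r where sr: "s < beta" "r < beta" "r \<noteq> s"
      and y: "y = \<bar>mu s - nu s\<bar> / \<bar>mu r - mu s\<bar>"
      using \<open>y \<in> S\<close> unfolding S_def by blast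
    \<comment> \<open>if \<open>mu r = mu s\<close> the ratio is \<open>0\<close> by division by zero, hence the need for \<open>g \<ge> 0\<close>\<close>
    show ?thesis
      using assms(3)[OF sr] assms(2) unfolding y
      by (cases "mu r = mu s") (simp_all add: divide_le_eq mult.commute)
  qed
  ultimately have "Max S \<le> g"
    by (subst Max_le_iff) auto
  then show ?thesis
    unfolding gamma_def S_def .
qed

lemma exists_center_near_mean:
  fixes x cen mu :: "nat \<Rightarrow> real"
  assumes lab: "\<forall>i<N. lab i < beta" and C: "\<forall>i<N. C i < beta" and alpha: "alpha \<ge> 0"
    and approx: "clust_cost N x cen C \<le> alpha * OPT N beta x"
    and ne: "T N lab s \<noteq> {}"
  shows "\<exists>j<beta. \<bar>cen j - mu s\<bar> \<le> (alpha + 1) * phi_star N x lab mu / card (T N lab s)"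
proof -
  have "clust_cost N x cen C \<le> alpha * phi_star N x lab mu"
    using approx mult_left_mono[OF OPT_le_phi_star[OF lab, of x mu] alpha] by linarith
  moreover obtain j where "j < beta"
    and "card (T N lab s) * \<bar>cen j - mu s\<bar> \<le> clust_cost N x cen C + phi_star N x lab mu"
    using exists_assigned_center_near_mean[OF C ne] by blast
  moreover have "card (T N lab s) > 0"
    using ne by (simp add: card_gt_0_iff T_def)
  ultimately show ?thesis
    by (auto simp: pos_le_divide_eq algebra_simps)
qed

lemma gamma_le_of_near_centers:
  fixes n :: "nat \<Rightarrow> real"
  assumes beta: "beta \<ge> 2" and c: "c > 0" and a: "a \<ge> 0" and D: "D \<ge> 0"
    and n: "\<And>s. s < beta \<Longrightarrow> n s > 0"
    and sep: "\<And>r s. r < beta \<Longrightarrow> s < beta \<Longrightarrow> r \<noteq> s \<Longrightarrow>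
      c * D * (1 / n s + 1 / n r) \<le> \<bar>mu r - mu s\<bar>"
    and near: "\<And>s. s < beta \<Longrightarrow> \<bar>nu s - mu s\<bar> \<le> a * D / n s"
  shows "gamma beta mu nu \<le> a / c"
proof (rule gamma_le[OF beta])
  fix s r assume sr: "s < beta" "r < beta" "r \<noteq> s"
  have "c * D / n s \<le> c * D * (1 / n s + 1 / n r)"
    using n[OF sr(1)] n[OF sr(2)] c D by (simp add: field_simps)
  also have "\<dots> \<le> \<bar>mu r - mu s\<bar>"
    using sep sr by blast
  finally have sep_s: "c * D / n s \<le> \<bar>mu r - mu s\<bar>" .
  have "\<bar>mu s - nu s\<bar> \<le> a * D / n s"
    using near[OF sr(1)] by (simp add: abs_minus_commute)
  also have "\<dots> = a / c * (c * D / n s)"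
    using c by simp
  also have "\<dots> \<le> a / c * \<bar>mu r - mu s\<bar>"
    using sep_s a c by (intro mult_left_mono) auto
  finally show "\<bar>mu s - nu s\<bar> \<le> a / c * \<bar>mu r - mu s\<bar>" .
qed (use a c in simp)

theorem lemma7:
  fixes N beta :: nat and x :: "nat \<Rightarrow> real" and lab :: "nat \<Rightarrow> nat"
    and mu :: "nat \<Rightarrow> real" and c alpha :: real
    and cen :: "nat \<Rightarrow> real" and C :: "nat \<Rightarrow> nat"
  assumes beta: "beta \<ge> 2"
    and lab: "\<forall>i<N. lab i < beta"
    and nonempty: "\<forall>s<beta. card (T N lab s) > 0"
    and c: "c > 0"
    and alpha: "alpha \<ge> 1"
    and C: "\<forall>i<N. C i < beta"
    and approx: "clust_cost N x cen C \<le> alpha * OPT N beta x"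
    and sep: "\<forall>r<beta. \<forall>s<beta. r \<noteq> s \<longrightarrow>
       \<bar>mu r - mu s\<bar> \<ge> c * phi_star N x lab mu * (1 / card (T N lab s) + 1 / card (T N lab r))"
  shows "\<exists>\<sigma>. (\<forall>s<beta. \<sigma> s < beta \<and>
            \<bar>cen (\<sigma> s) - mu s\<bar> \<le> 2 * (alpha + 1) * phi_star N x lab mu / card (T N lab s))
          \<and> gamma beta mu (cen \<circ> \<sigma>) < 2 * (alpha + 1) / c"
proof -
  let ?\<phi> = "phi_star N x lab mu" and ?n = "\<lambda>s. real (card (T N lab s))"
  have n: "?n s > 0" if "s < beta" for s
    using nonempty that by simp
  have "\<exists>j<beta. \<bar>cen j - mu s\<bar> \<le> (alpha + 1) * ?\<phi> / ?n s" if "s < beta" for s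
    using exists_center_near_mean[OF lab C _ approx, of s mu] nonempty that alpha by fastforce
  then obtain \<sigma> where \<sigma>: "\<And>s. s < beta \<Longrightarrow>
      \<sigma> s < beta \<and> \<bar>cen (\<sigma> s) - mu s\<bar> \<le> (alpha + 1) * ?\<phi> / ?n s"
    by metis
  have near: "\<bar>cen (\<sigma> s) - mu s\<bar> \<le> 2 * (alpha + 1) * ?\<phi> / ?n s" if "s < beta" for s
    using \<sigma>[OF that] n[OF that] phi_star_nonneg[of N x lab mu] alpha
    by (smt (verit, best) divide_right_mono mult_right_mono)
  have "gamma beta mu (cen \<circ> \<sigma>) \<le> (alpha + 1) / c"
    using sep \<sigma> alpha
    by (intro gamma_le_of_near_centers[OF beta c _ phi_star_nonneg n]) auto
  also have "\<dots> < 2 * (alpha + 1) / c"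
    using alpha c by (simp add: divide_strict_right_mono)
  finally show ?thesis
    using \<sigma> near by blast
qed

end
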